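(* Let $N\geq 1$ be an integer. Then for all $|t|<\pi/2$, \[ t\sec^2 t-\tan t=\sum_{j=1}^{N-1}\frac{2j\cdot 2^{2j+2}(2^{2j+2}-1)|B_{2j+2}|}{(2j+2)!}t^{2j+1}+\kappa_N(t), \] where \[ \kappa_N(t)=\frac{N\cdot 2^{2N+4}t^{2N+1}}{\pi^{2N}}\sum_{k=1}^{\infty}\frac{1}{(2k-1)^{2N}\bigl(\pi^2(2k-1)^2-4t^2\bigr)}+\frac{2^{2N+6}t^{2N+3}}{\pi^{2N}}\sum_{k=1}^{\infty}\frac{1}{(2k-1)^{2N}\bigl(\pi^2(2k-1)^2-4t^2\bigr)^2}. \]
   Context: The Bernoulli numbers $B_n$ are defined by $\frac{t}{e^t-1}=\sum_{n=0}^\infty B_n\frac{t^n}{n!}$ for $|t|<2\pi$. An empty sum is understood to be zero. *)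

theory Defs
  imports "HOL-Analysis.Analysis"
begin

text \<open>Bernoulli numbers, defined via the generating function
  t/(e^t - 1) = sum_n B_n t^n / n!  for 0 < |t| < 2 pi.
  (At t = 0 the left side is understood as its limit 1; restricting to
  t \<noteq> 0 still determines the sequence uniquely.)\<close>
definition bernoulli_num :: "nat \<Rightarrow> real" where
  "bernoulli_num = (THE B. \<forall>t::real. t \<noteq> 0 \<and> \<bar>t\<bar> < 2 * pi \<longrightarrow>
      (\<lambda>n. B n * t ^ n / fact n) sums (t / (exp t - 1)))"

definition kappa :: "nat \<Rightarrow> real \<Rightarrow> real" where
  "kappa N t =
     real N * 2 ^ (2 * N + 4) * t ^ (2 * N + 1) / pi ^ (2 * N) *
       (\<Sum>k. 1 / ((2 * real (Suc k) - 1) ^ (2 * N) *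
                 (pi\<^sup>2 * (2 * real (Suc k) - 1)\<^sup>2 - 4 * t\<^sup>2)))
   + 2 ^ (2 * N + 6) * t ^ (2 * N + 3) / pi ^ (2 * N) *
       (\<Sum>k. 1 / ((2 * real (Suc k) - 1) ^ (2 * N) *
                 (pi\<^sup>2 * (2 * real (Suc k) - 1)\<^sup>2 - 4 * t\<^sup>2)\<^sup>2))"

end

theory Submission
  imports Defs
begin

(* Taking the logarithmic derivative of the product formula
     cos x = prod_k (1 - 4 x^2 / (pi^2 (2k+1)^2))
   gives  tan t = sum_k 8 t / (pi^2 (2k+1)^2 - 4 t^2),  and termwise differentiation gives
     t sec^2 t - tan t = sum_k 64 t^3 / (pi^2 (2k+1)^2 - 4 t^2)^2.
   Writing a summand as 16 t x / (A - x)^2 with A = pi^2 (2k+1)^2 and x = 4 t^2, expand it in powers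
   of x / A up to order N with an exact remainder.  Summed over k, the polynomial part produces the
   odd zeta values (1 - 2^-n) zeta(n), which Euler's formula |B_2m| = 2 (2m)! zeta(2m) / (2 pi)^2m
   turns into Bernoulli numbers, while the remainder is kappa_N(t).  Euler's formula comes from the
   same mechanism applied to the product for sinh: the partial fractions of coth give t / (e^t - 1)
   as a double series, and summing it the other way round yields its power series. *)

section \<open>Partial fractions of tan and of its derivative\<close>

definition tan_denom :: "real \<Rightarrow> nat \<Rightarrow> real" where
  "tan_denom t k = pi\<^sup>2 * (2 * real k + 1)\<^sup>2 - 4 * t\<^sup>2"

lemma odd_square_ge_1: "1 \<le> (2 * real k + 1)\<^sup>2"
  by (simp add: one_le_power)

lemma summable_inverse_odd_squares: "summable (\<lambda>k. 1 / (2 * real k + 1)\<^sup>2)"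
proof (rule summable_comparison_test'[of "\<lambda>k. 1 / (real (Suc k))\<^sup>2"])
  show "summable (\<lambda>k. 1 / (real (Suc k))\<^sup>2)"
    using inverse_squares_sums by (simp add: sums_iff)
  show "norm (1 / (2 * real k + 1)\<^sup>2) \<le> 1 / (real (Suc k))\<^sup>2" for k
    by (simp add: divide_left_mono power_mono)
qed

lemma pi_square_minus_pos:
  assumes "\<bar>R\<bar> < pi / 2"
  shows "0 < pi\<^sup>2 - 4 * R\<^sup>2"
proof -
  have "\<bar>2 * R\<bar>\<^sup>2 < pi\<^sup>2"
    using assms by (intro power_strict_mono) auto
  thus ?thesis by (simp add: power_mult_distrib)
qed

lemma tan_denom_lower_bound:
  assumes "\<bar>t\<bar> \<le> R"
  shows "(pi\<^sup>2 - 4 * R\<^sup>2) * (2 * real k + 1)\<^sup>2 \<le> tan_denom t k"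
proof -
  have "t\<^sup>2 \<le> R\<^sup>2"
    using assms by (metis abs_le_square_iff abs_of_nonneg abs_ge_zero order_trans)
  moreover have "R\<^sup>2 \<le> R\<^sup>2 * (2 * real k + 1)\<^sup>2"
    using odd_square_ge_1[of k] by (simp add: mult_le_cancel_left1)
  ultimately show ?thesis
    by (simp add: tan_denom_def algebra_simps)
qed

lemma tan_denom_pos:
  assumes "\<bar>t\<bar> < pi / 2"
  shows "0 < tan_denom t k"
proof -
  have "0 < (pi\<^sup>2 - 4 * \<bar>t\<bar>\<^sup>2) * (2 * real k + 1)\<^sup>2"
    using pi_square_minus_pos[of "\<bar>t\<bar>"] assms odd_square_ge_1[of k] by simp
  also have "\<dots> \<le> tan_denom t k"
    by (rule tan_denom_lower_bound) simp
  finally show ?thesis .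
qed

lemma logderiv_prod_sums:
  fixes u u' :: "nat \<Rightarrow> real \<Rightarrow> real" and M :: "nat \<Rightarrow> real" and F :: "real \<Rightarrow> real"
  assumes S: "open S" "convex S" "x \<in> S"
    and u_pos: "\<And>k y. y \<in> S \<Longrightarrow> 0 < u k y"
    and u_deriv: "\<And>k y. y \<in> S \<Longrightarrow> (u k has_real_derivative u' k y) (at y)"
    and bound: "\<And>k y. y \<in> S \<Longrightarrow> \<bar>u' k y / u k y\<bar> \<le> M k" "summable M"
    and prod: "\<And>y. y \<in> S \<Longrightarrow> (\<lambda>n. \<Prod>k<n. u k y) \<longlonglongrightarrow> F y"
    and F_pos: "\<And>y. y \<in> S \<Longrightarrow> 0 < F y"
    and F_deriv: "(F has_real_derivative F') (at x)"
  shows "(\<lambda>k. u' k x / u k x) sums (F' / F x)"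
proof -
  have ln_sums: "(\<lambda>k. ln (u k y)) sums ln (F y)" if "y \<in> S" for y
  proof -
    have "(\<lambda>n. ln (\<Prod>k<n. u k y)) \<longlonglongrightarrow> ln (F y)"
      using prod[OF that] F_pos[OF that] by (intro tendsto_ln) auto
    moreover have "ln (\<Prod>k<n. u k y) = (\<Sum>k<n. ln (u k y))" for n
      using u_pos that by (subst ln_prod) (auto simp: order_less_imp_not_eq2)
    ultimately show ?thesis unfolding sums_def by simp
  qed
  have uniform: "uniformly_convergent_on S (\<lambda>n y. \<Sum>k<n. u' k y / u k y)"
    using Weierstrass_m_test[of S "\<lambda>k y. u' k y / u k y" M] bound
    unfolding uniformly_convergent_on_def by auto
  have ln_deriv: "((\<lambda>y. ln (u k y)) has_field_derivative u' k y / u k y) (at y within S)"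
    if "y \<in> S" for k y
    using DERIV_chain2[OF DERIV_ln_divide[OF u_pos[OF that]] u_deriv[OF that]]
    by (auto intro: has_field_derivative_at_within)
  have "((\<lambda>y. \<Sum>k. ln (u k y)) has_field_derivative (\<Sum>k. u' k x / u k x)) (at x)"
    using has_field_derivative_series'(2)[OF S(2) ln_deriv uniform S(3)
        sums_summable[OF ln_sums[OF S(3)]]] S by (simp add: interior_open)
  moreover have "((\<lambda>y. \<Sum>k. ln (u k y)) has_field_derivative (1 / F x) * F') (at x)"
  proof (rule has_field_derivative_transform_within_open[OF _ S(1) S(3)])
    show "((\<lambda>y. ln (F y)) has_field_derivative (1 / F x) * F') (at x)"
      by (rule DERIV_chain2[OF DERIV_ln_divide[OF F_pos[OF S(3)]] F_deriv])
  qed (use ln_sums sums_unique in metis)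
  moreover have "summable (\<lambda>k. u' k x / u k x)"
    by (rule summable_comparison_test'[OF bound(2)]) (use bound(1) S(3) in auto)
  ultimately show ?thesis
    using DERIV_unique summable_sums by fastforce
qed

lemma prod_split_even_odd:
  fixes f :: "nat \<Rightarrow> 'a :: comm_monoid_mult"
  shows "(\<Prod>k=1..2*n. f k) = (\<Prod>k=1..n. f (2 * k)) * (\<Prod>k<n. f (2 * k + 1))"
proof (induction n)
  case (Suc n)
  have "{1..2 * Suc n} = insert (2 * n + 2) (insert (2 * n + 1) {1..2 * n})"
    by auto
  with Suc show ?case
    by (simp add: mult_ac)
qed simp

lemma cos_product_formula_real:
  fixes x :: real
  assumes "\<bar>x\<bar> < 1 / 2"
  shows "(\<lambda>n. \<Prod>k<n. 1 - 4 * x\<^sup>2 / (2 * real k + 1)\<^sup>2) \<longlonglongrightarrow> cos (pi * x)"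
proof (cases "x = 0")
  case False
  define P where "P y n = (\<Prod>k=1..n. 1 - y\<^sup>2 / (real k)\<^sup>2)" for y n
  have P_pos: "0 < P x n" for n
    unfolding P_def
  proof (intro prod_pos)
    fix k assume "k \<in> {1..n}"
    hence "\<bar>x\<bar>\<^sup>2 < (real k)\<^sup>2"
      using assms by (intro power_strict_mono) auto
    thus "0 < 1 - x\<^sup>2 / (real k)\<^sup>2"
      using \<open>k \<in> {1..n}\<close> by (simp add: field_simps)
  qed
  have "P (2 * x) (2 * n) = P x n * (\<Prod>k<n. 1 - 4 * x\<^sup>2 / (2 * real k + 1)\<^sup>2)" for n
    unfolding P_def prod_split_even_odd
    by (intro arg_cong2[where f = "(*)"] prod.cong refl) (simp_all add: power_mult_distrib)
  hence quotient:
    "P (2 * x) (2 * n) / P x n = (\<Prod>k<n. 1 - 4 * x\<^sup>2 / (2 * real k + 1)\<^sup>2)" for n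
    using P_pos[of n] by simp
  have "sin (pi * x) \<noteq> 0"
  proof
    assume "sin (pi * x) = 0"
    then obtain i :: int where "x = of_int i"
      using sin_zero_iff_int2 by fastforce
    with assms False show False by simp
  qed
  have "P (2 * x) \<longlonglongrightarrow> sin (pi * (2 * x)) / (pi * (2 * x))"
    unfolding P_def using False by (intro sin_product_formula_real') simp
  hence "(\<lambda>n. P (2 * x) (2 * n)) \<longlonglongrightarrow> sin (pi * (2 * x)) / (pi * (2 * x))"
    using LIMSEQ_subseq_LIMSEQ[of _ _ "\<lambda>n. 2 * n"] by (simp add: strict_mono_def o_def)
  hence "(\<lambda>n. P (2 * x) (2 * n) / P x n)
           \<longlonglongrightarrow> (sin (pi * (2 * x)) / (pi * (2 * x))) / (sin (pi * x) / (pi * x))"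
    using \<open>sin (pi * x) \<noteq> 0\<close> False sin_product_formula_real'[of x]
    by (intro tendsto_divide) (auto simp: P_def)
  moreover have "(sin (pi * (2 * x)) / (pi * (2 * x))) / (sin (pi * x) / (pi * x)) = cos (pi * x)"
    using sin_double[of "pi * x"] \<open>sin (pi * x) \<noteq> 0\<close> False by (simp add: field_simps mult_ac)
  ultimately show ?thesis
    unfolding quotient by simp
qed simp

lemma cos_pos_of_abs_less:
  "\<bar>t\<bar> < pi / 2 \<Longrightarrow> 0 < cos t"
  by (intro cos_gt_zero_pi) auto

lemma tan_partial_fractions:
  assumes t: "\<bar>t\<bar> < pi / 2"
  shows "(\<lambda>k. 8 * t / tan_denom t k) sums tan t"
proof -
  define R where "R = (\<bar>t\<bar> + pi / 2) / 2"
  have R: "\<bar>t\<bar> < R" "R < pi / 2"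
    using t by (auto simp: R_def)
  define S where "S = {-R<..<R}"
  define u where "u k y = 1 - 4 * y\<^sup>2 / (pi\<^sup>2 * (2 * real k + 1)\<^sup>2)" for k y
  define u' where "u' k y = - 8 * y / (pi\<^sup>2 * (2 * real k + 1)\<^sup>2)" for k y
  have w: "0 < pi\<^sup>2 * (2 * real k + 1)\<^sup>2" for k
    by (simp add: add_pos_nonneg)
  have y_S: "\<bar>y\<bar> < R" "\<bar>y\<bar> < pi / 2" if "y \<in> S" for y
    using that R by (auto simp: S_def)
  have u_eq: "u k y = tan_denom y k / (pi\<^sup>2 * (2 * real k + 1)\<^sup>2)" for k y
    using w[of k] by (simp add: u_def tan_denom_def field_simps)
  have quotient: "u' k y / u k y = - (8 * y / tan_denom y k)" for k y
    using w[of k] by (simp add: u_eq u'_def)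
  have "(\<lambda>k. u' k t / u k t) sums (- sin t / cos t)"
  proof (rule logderiv_prod_sums[where S = S and F = cos and F' = "- sin t" and M = "\<lambda>k. 8 * R / (pi\<^sup>2 - 4 * R\<^sup>2) * (1 / (2 * real k + 1)\<^sup>2)"])
    show "open S" "convex S" "t \<in> S"
      using R by (auto simp: S_def)
    show "0 < u k y" if "y \<in> S" for k y
      unfolding u_eq using w[of k] tan_denom_pos[OF y_S(2)[OF that]] by simp
    show "(u k has_real_derivative u' k y) (at y)" for k y
      using w[of k] unfolding u_def u'_def
      by (auto intro!: derivative_eq_intros simp: field_simps)
    show "\<bar>u' k y / u k y\<bar> \<le> 8 * R / (pi\<^sup>2 - 4 * R\<^sup>2) * (1 / (2 * real k + 1)\<^sup>2)"
      if "y \<in> S" for k y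
    proof -
      have "0 < (pi\<^sup>2 - 4 * R\<^sup>2) * (2 * real k + 1)\<^sup>2"
        using pi_square_minus_pos[of R] R odd_square_ge_1[of k] by simp
      moreover have "(pi\<^sup>2 - 4 * R\<^sup>2) * (2 * real k + 1)\<^sup>2 \<le> tan_denom y k"
        using y_S(1)[OF that] by (intro tan_denom_lower_bound) simp
      ultimately have "8 * \<bar>y\<bar> / tan_denom y k \<le> 8 * R / ((pi\<^sup>2 - 4 * R\<^sup>2) * (2 * real k + 1)\<^sup>2)"
        using y_S(1)[OF that] by (intro frac_le) auto
      thus ?thesis
        using tan_denom_pos[OF y_S(2)[OF that], of k] by (simp add: quotient abs_divide abs_mult)
    qed
    show "summable (\<lambda>k. 8 * R / (pi\<^sup>2 - 4 * R\<^sup>2) * (1 / (2 * real k + 1)\<^sup>2))"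
      by (intro summable_mult summable_inverse_odd_squares)
    show "(\<lambda>n. \<Prod>k<n. u k y) \<longlonglongrightarrow> cos y" if "y \<in> S" for y
      using cos_product_formula_real[of "y / pi"] y_S(2)[OF that]
      by (simp add: u_def abs_divide field_simps power_divide)
    show "0 < cos y" if "y \<in> S" for y
      using y_S(2)[OF that] by (rule cos_pos_of_abs_less)
  qed (auto intro!: derivative_eq_intros)
  hence "(\<lambda>k. - (u' k t / u k t)) sums (- (- sin t / cos t))"
    by (rule sums_minus)
  thus ?thesis
    by (simp add: quotient tan_def)
qed

lemma tan_partial_fraction_deriv_bound:
  assumes "\<bar>z\<bar> \<le> R" "R < pi / 2"
  shows "8 * (pi\<^sup>2 * (2 * real k + 1)\<^sup>2 + 4 * z\<^sup>2) / (tan_denom z k)\<^sup>2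
           \<le> 16 * pi\<^sup>2 / (pi\<^sup>2 - 4 * R\<^sup>2)\<^sup>2 * (1 / (2 * real k + 1)\<^sup>2)"
proof -
  define w where "w = (2 * real k + 1)\<^sup>2"
  define c where "c = pi\<^sup>2 - 4 * R\<^sup>2"
  have w: "1 \<le> w" and c: "0 < c"
    using odd_square_ge_1 pi_square_minus_pos[of R] assms by (auto simp: w_def c_def)
  have "4 * z\<^sup>2 \<le> pi\<^sup>2 * w"
  proof -
    have "\<bar>2 * z\<bar>\<^sup>2 \<le> pi\<^sup>2"
      using assms by (intro power_mono) auto
    also have "\<dots> \<le> pi\<^sup>2 * w"
      using w by simp
    finally show ?thesis by (simp add: power_mult_distrib)
  qed
  hence "8 * (pi\<^sup>2 * w + 4 * z\<^sup>2) / (tan_denom z k)\<^sup>2 \<le> 8 * (2 * pi\<^sup>2 * w) / (c * w)\<^sup>2"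
    using tan_denom_lower_bound[OF assms(1), of k] c w
    by (intro frac_le power_mono) (auto simp: w_def c_def)
  also have "\<dots> = 16 * pi\<^sup>2 / c\<^sup>2 * (1 / w)"
    using c w by (simp add: field_simps power2_eq_square)
  finally show ?thesis
    by (simp add: w_def c_def)
qed

lemma tan_deriv_partial_fractions:
  assumes t: "\<bar>t\<bar> < pi / 2"
  shows "(\<lambda>k. 64 * t ^ 3 / (tan_denom t k)\<^sup>2) sums (t / (cos t)\<^sup>2 - tan t)"
proof -
  define R where "R = (\<bar>t\<bar> + pi / 2) / 2"
  have R: "\<bar>t\<bar> < R" "R < pi / 2"
    using t by (auto simp: R_def)
  define S where "S = {-R<..<R}"
  have z_S: "\<bar>z\<bar> \<le> R" "\<bar>z\<bar> < pi / 2" if "z \<in> S" for z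
    using that R by (auto simp: S_def)
  have S: "open S" "convex S" "0 \<in> S" "t \<in> interior S" "t \<in> S"
    using R by (auto simp: S_def)
  define h' where "h' k z = 8 * (pi\<^sup>2 * (2 * real k + 1)\<^sup>2 + 4 * z\<^sup>2) / (tan_denom z k)\<^sup>2" for k z
  define M where "M k = 16 * pi\<^sup>2 / (pi\<^sup>2 - 4 * R\<^sup>2)\<^sup>2 * (1 / (2 * real k + 1)\<^sup>2)" for k
  have deriv: "((\<lambda>z. 8 * z / tan_denom z k) has_field_derivative h' k z) (at z within S)"
    if "z \<in> S" for k z
    using tan_denom_pos[OF z_S(2)[OF that], of k] unfolding h'_def tan_denom_def
    by (auto intro!: derivative_eq_intros simp: field_simps power2_eq_square)
  have bound: "norm (h' k z) \<le> M k" if "z \<in> S" for k z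
    using tan_partial_fraction_deriv_bound[OF z_S(1)[OF that] R(2)]
    by (simp add: h'_def M_def)
  have "summable M"
    unfolding M_def by (intro summable_mult summable_inverse_odd_squares)
  hence "uniformly_convergent_on S (\<lambda>n z. \<Sum>k<n. h' k z)"
    using Weierstrass_m_test[of S h' M] bound unfolding uniformly_convergent_on_def by blast
  from has_field_derivative_series'(2)[OF S(2) deriv this S(3) _ S(4)]
  have "((\<lambda>z. \<Sum>k. 8 * z / tan_denom z k) has_field_derivative (\<Sum>k. h' k t)) (at t)"
    using S(1) by (simp add: interior_open)
  hence "(tan has_field_derivative (\<Sum>k. h' k t)) (at t)"
    by (rule has_field_derivative_transform_within_open[OF _ S(1) S(5)])
       (use tan_partial_fractions z_S(2) sums_unique in metis)
  moreover have "(tan has_field_derivative inverse ((cos t)\<^sup>2)) (at t)"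
    using cos_pos_of_abs_less[OF t] by (intro DERIV_tan) simp
  moreover have "summable (\<lambda>k. h' k t)"
    by (rule summable_comparison_test'[OF \<open>summable M\<close>])
       (use bound S(5) in auto)
  ultimately have "(\<lambda>k. h' k t) sums (1 / (cos t)\<^sup>2)"
    using DERIV_unique by (fastforce simp: summable_sums_iff divide_inverse)
  hence "(\<lambda>k. t * h' k t - 8 * t / tan_denom t k) sums (t * (1 / (cos t)\<^sup>2) - tan t)"
    by (intro sums_diff sums_mult tan_partial_fractions t)
  moreover have "t * h' k t - 8 * t / tan_denom t k = 64 * t ^ 3 / (tan_denom t k)\<^sup>2" for k
  proof -
    have "pi\<^sup>2 * (2 * real k + 1)\<^sup>2 = tan_denom t k + 4 * t\<^sup>2"
      by (simp add: tan_denom_def)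
    thus ?thesis
      using tan_denom_pos[OF t, of k] unfolding h'_def
      by (simp add: field_simps power2_eq_square power3_eq_cube)
  qed
  ultimately show ?thesis
    by simp
qed

section \<open>Euler's formula for the Bernoulli numbers\<close>

definition zeta_nat :: "nat \<Rightarrow> real" where
  "zeta_nat n = (\<Sum>k. 1 / real (Suc k) ^ n)"

lemma zeta_nat_sums:
  assumes "2 \<le> n"
  shows "(\<lambda>k. 1 / real (Suc k) ^ n) sums zeta_nat n"
proof -
  have "summable (\<lambda>k. inverse (real (Suc k) ^ n))"
    using inverse_power_summable[OF assms] by (subst summable_Suc_iff)
  thus ?thesis
    unfolding zeta_nat_def by (simp add: summable_sums inverse_eq_divide)
qed

lemma zeta_nat_nonneg: "2 \<le> n \<Longrightarrow> 0 \<le> zeta_nat n"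
  by (rule sums_le[OF _ sums_zero zeta_nat_sums]) auto

lemma odd_zeta_sums:
  assumes "2 \<le> n"
  shows "(\<lambda>k. 1 / (2 * real k + 1) ^ n) sums ((1 - 1 / 2 ^ n) * zeta_nat n)"
proof -
  have "(\<lambda>k. \<Sum>j\<in>{k * 2..<k * 2 + 2}. 1 / real (Suc j) ^ n) sums zeta_nat n"
    by (rule sums_group[OF zeta_nat_sums[OF assms]]) simp
  moreover have "(\<lambda>k. 1 / 2 ^ n * (1 / real (Suc k) ^ n)) sums (1 / 2 ^ n * zeta_nat n)"
    by (intro sums_mult zeta_nat_sums assms)
  ultimately have "(\<lambda>k. (\<Sum>j\<in>{k * 2..<k * 2 + 2}. 1 / real (Suc j) ^ n)
                        - 1 / 2 ^ n * (1 / real (Suc k) ^ n)) sums (zeta_nat n - 1 / 2 ^ n * zeta_nat n)"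
    by (rule sums_diff)
  moreover have "(\<Sum>j\<in>{k * 2..<k * 2 + 2}. 1 / real (Suc j) ^ n) - 1 / 2 ^ n * (1 / real (Suc k) ^ n)
                   = 1 / (2 * real k + 1) ^ n" for k
  proof -
    have "real (Suc (k * 2 + 1)) ^ n = 2 ^ n * real (Suc k) ^ n"
      by (simp flip: power_mult_distrib add: algebra_simps)
    thus ?thesis
      by (simp add: numeral_2_eq_2 add.commute)
  qed
  ultimately show ?thesis
    by (simp add: left_diff_distrib)
qed

lemma sinh_product_formula_real:
  fixes x :: real
  assumes "x \<noteq> 0"
  shows "(\<lambda>n. \<Prod>k<n. 1 + x\<^sup>2 / real (Suc k) ^ 2) \<longlonglongrightarrow> sinh (pi * x) / (pi * x)"
proof -
  define z where "z = \<i> * complex_of_real x"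
  define c where "c = - \<i> / complex_of_real (pi * x)"
  have "(\<lambda>n. c * (of_real pi * z * (\<Prod>k=1..n. 1 - z\<^sup>2 / of_nat k ^ 2)))
          \<longlonglongrightarrow> c * sin (of_real pi * z)"
    by (intro tendsto_mult_left sin_product_formula_complex)
  moreover have "c * (of_real pi * z * (\<Prod>k=1..n. 1 - z\<^sup>2 / of_nat k ^ 2))
                   = of_real (\<Prod>k<n. 1 + x\<^sup>2 / real (Suc k) ^ 2)" for n
  proof -
    have "c * (of_real pi * z) = 1"
      using assms by (simp add: c_def z_def field_simps)
    moreover have "(\<Prod>k=1..n. 1 - z\<^sup>2 / of_nat k ^ 2) = (\<Prod>k=1..n. of_real (1 + x\<^sup>2 / real k ^ 2))"
      by (intro prod.cong) (simp_all add: z_def power_mult_distrib)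
    ultimately show ?thesis
      by (simp add: prod.atLeast1_atMost_eq mult.assoc[symmetric] of_real_prod)
  qed
  moreover have "c * sin (of_real pi * z) = of_real (sinh (pi * x) / (pi * x))"
  proof -
    have "sinh (complex_of_real (pi * x)) = of_real (sinh (pi * x))"
      by (simp add: sinh_field_def exp_of_real flip: of_real_minus of_real_mult)
    thus ?thesis
      using sinh_conv_sin[of "complex_of_real (pi * x)"] by (simp add: c_def z_def mult_ac)
  qed
  ultimately have "(\<lambda>n. complex_of_real (\<Prod>k<n. 1 + x\<^sup>2 / real (Suc k) ^ 2))
                    \<longlonglongrightarrow> complex_of_real (sinh (pi * x) / (pi * x))"
    by (simp only:)
  thus ?thesis
    by (simp only: tendsto_of_real_iff)
qed

lemma coth_partial_fractions:
  fixes x :: real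
  assumes x: "0 < x"
  shows "(\<lambda>k. 2 * x / (real (Suc k) ^ 2 + x\<^sup>2)) sums (pi * cosh (pi * x) / sinh (pi * x) - 1 / x)"
proof -
  define S where "S = {0<..<x + 1}"
  define u where "u k y = 1 + y\<^sup>2 / real (Suc k) ^ 2" for k y
  define u' where "u' k y = 2 * y / real (Suc k) ^ 2" for k y
  define F where "F y = sinh (pi * y) / (pi * y)" for y
  have quotient: "u' k y / u k y = 2 * y / (real (Suc k) ^ 2 + y\<^sup>2)" for k y
  proof -
    have "u k y = (real (Suc k) ^ 2 + y\<^sup>2) / real (Suc k) ^ 2"
      by (simp add: u_def field_simps)
    thus ?thesis by (simp add: u'_def)
  qed
  have "(\<lambda>k. u' k x / u k x)
          sums ((pi * cosh (pi * x) * (pi * x) - sinh (pi * x) * pi) / (pi * x)\<^sup>2 / F x)"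
  proof (rule logderiv_prod_sums[where S = S and F = F and M = "\<lambda>k. 2 * (x + 1) * (1 / real (Suc k) ^ 2)"])
    show "open S" "convex S" "x \<in> S"
      using x by (auto simp: S_def)
    show "0 < u k y" for k y
      unfolding u_def by (simp add: add_pos_nonneg)
    show "(u k has_real_derivative u' k y) (at y)" for k y
      unfolding u_def u'_def by (auto intro!: derivative_eq_intros simp: field_simps)
    show "\<bar>u' k y / u k y\<bar> \<le> 2 * (x + 1) * (1 / real (Suc k) ^ 2)" if "y \<in> S" for k y
      using that unfolding quotient S_def by (auto intro!: frac_le)
    show "summable (\<lambda>k. 2 * (x + 1) * (1 / real (Suc k) ^ 2))"
      by (intro summable_mult sums_summable[OF zeta_nat_sums]) simp
    show "(\<lambda>n. \<Prod>k<n. u k y) \<longlonglongrightarrow> F y" if "y \<in> S" for y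
      using sinh_product_formula_real[of y] that by (simp add: S_def u_def F_def)
    show "0 < F y" if "y \<in> S" for y
      using that by (simp add: S_def F_def)
    show "(F has_real_derivative (pi * cosh (pi * x) * (pi * x) - sinh (pi * x) * pi) / (pi * x)\<^sup>2) (at x)"
      unfolding F_def using x by (auto intro!: derivative_eq_intros simp: power2_eq_square)
  qed
  moreover have "(pi * cosh (pi * x) * (pi * x) - sinh (pi * x) * pi) / (pi * x)\<^sup>2 / F x
                   = pi * cosh (pi * x) / sinh (pi * x) - 1 / x"
    using x by (simp add: F_def field_simps power2_eq_square)
  ultimately show ?thesis
    by (simp add: quotient)
qed

lemma half_coth_half:
  fixes t :: real
  assumes "t \<noteq> 0"
  shows "t / 2 * cosh (t / 2) / sinh (t / 2) = t / (exp t - 1) + t / 2"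
proof -
  define E where "E = exp (t / 2)"
  have E: "exp t = E\<^sup>2" "exp (- (t / 2)) = 1 / E" "0 < E"
    by (simp_all add: E_def power2_eq_square exp_minus field_simps flip: exp_add)
  have "E\<^sup>2 \<noteq> 1"
    using assms E(1) by auto
  hence "E\<^sup>2 - 1 \<noteq> 0" "E \<noteq> 0"
    using E(3) by auto
  thus ?thesis
    unfolding sinh_field_def cosh_field_def E_def[symmetric] E(1,2)
    by (simp add: field_simps power2_eq_square)
qed

lemma bernoulli_generating_partial_fractions:
  fixes t :: real
  assumes "t \<noteq> 0"
  shows "(\<lambda>k. 2 * t\<^sup>2 / (4 * pi\<^sup>2 * real (Suc k) ^ 2 + t\<^sup>2)) sums (t / (exp t - 1) + t / 2 - 1)"
proof -
  define x where "x = \<bar>t\<bar> / (2 * pi)"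
  have x: "0 < x" "pi * x = \<bar>t\<bar> / 2"
    using assms by (simp_all add: x_def)
  have "(\<lambda>k. x * (2 * x / (real (Suc k) ^ 2 + x\<^sup>2)))
          sums (x * (pi * cosh (pi * x) / sinh (pi * x) - 1 / x))"
    by (intro sums_mult coth_partial_fractions x)
  moreover have "x * (2 * x / (real (Suc k) ^ 2 + x\<^sup>2)) = 2 * t\<^sup>2 / (4 * pi\<^sup>2 * real (Suc k) ^ 2 + t\<^sup>2)" for k
  proof -
    have "0 < 4 * pi\<^sup>2 * real (Suc k) ^ 2 + t\<^sup>2"
      by (intro add_pos_nonneg) auto
    thus ?thesis
      by (simp add: x_def field_simps power2_eq_square)
  qed
  moreover have "x * (pi * cosh (pi * x) / sinh (pi * x) - 1 / x) = t / 2 * cosh (t / 2) / sinh (t / 2) - 1"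
  proof -
    have "x * (pi * cosh (pi * x) / sinh (pi * x) - 1 / x) = pi * x * cosh (pi * x) / sinh (pi * x) - 1"
      using x(1) by (simp add: field_simps)
    also have "\<dots> = \<bar>t\<bar> / 2 * cosh (\<bar>t\<bar> / 2) / sinh (\<bar>t\<bar> / 2) - 1"
      by (simp only: x(2))
    also have "\<dots> = t / 2 * cosh (t / 2) / sinh (t / 2) - 1"
      by (cases "0 \<le> t") (simp_all add: minus_divide_left[symmetric])
    finally show ?thesis .
  qed
  ultimately show ?thesis
    using half_coth_half[OF assms] by simp
qed

lemma sums_swap_of_abs_summable:
  fixes f :: "nat \<Rightarrow> nat \<Rightarrow> real"
  assumes rows: "\<And>k. (\<lambda>m. f k m) sums r k"
    and cols: "\<And>m. (\<lambda>k. f k m) sums c m"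
    and abs_rows: "\<And>k. (\<lambda>m. \<bar>f k m\<bar>) sums a k" and "summable a"
    and "r sums L"
  shows "c sums L"
proof -
  have abs_rows': "((\<lambda>m. \<bar>f k m\<bar>) has_sum a k) UNIV" for k
    using abs_rows by (intro sums_nonneg_imp_has_sum) auto
  have "a summable_on UNIV"
  proof (rule summable_nonneg_imp_summable_on)
    show "0 \<le> a k" for k
      by (rule sums_le[OF _ sums_zero abs_rows[of k]]) simp
  qed (rule \<open>summable a\<close>)
  hence "(\<lambda>x. norm (case x of (k, m) \<Rightarrow> f k m)) summable_on UNIV \<times> UNIV"
    using abs_rows' by (intro summable_on_SigmaI[where g = a]) auto
  hence f: "(\<lambda>(k, m). f k m) summable_on UNIV \<times> UNIV"
    by (rule abs_summable_summable)
  define S where "S = infsum (\<lambda>(k, m). f k m) (UNIV \<times> UNIV)"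
  have f_has_sum: "((\<lambda>(k, m). f k m) has_sum S) (UNIV \<times> UNIV)"
    using f by (simp add: S_def)
  have "((\<lambda>m. f k m) has_sum r k) UNIV" for k
    using rows abs_rows by (intro norm_summable_imp_has_sum) (auto dest: sums_summable)
  hence "(r has_sum S) UNIV"
    by (intro has_sum_Sigma'[OF f_has_sum]) simp
  hence "S = L"
    using \<open>r sums L\<close> has_sum_imp_sums sums_unique2 by blast
  have S_swap: "((\<lambda>(m, k). f k m) has_sum S) (UNIV \<times> UNIV)"
    using f_has_sum has_sum_swap[of "\<lambda>(k, m). f k m" UNIV UNIV] by simp
  have "((\<lambda>k. f k m) has_sum c m) UNIV" for m
  proof -
    have "(\<lambda>(m, k). f k m) summable_on UNIV \<times> UNIV"
      using f summable_on_swap[of "\<lambda>(k, m). f k m" UNIV UNIV] by auto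
    hence "(\<lambda>k. f k m) summable_on UNIV"
      by (rule summable_on_SigmaD1[of "\<lambda>m k. f k m"]) simp
    thus ?thesis
      using cols[of m] has_sum_imp_sums sums_unique2 by (metis has_sum_infsum)
  qed
  hence "(c has_sum S) UNIV"
    by (intro has_sum_Sigma'[OF S_swap]) simp
  thus ?thesis
    using \<open>S = L\<close> by (simp add: has_sum_imp_sums)
qed

lemma alternating_geometric_sums:
  fixes q :: real
  assumes "0 \<le> q" "q < 1"
  shows "(\<lambda>m. 2 * (-1) ^ m * q ^ (m + 1)) sums (2 * q / (1 + q))"
    and "(\<lambda>m. \<bar>2 * (-1) ^ m * q ^ (m + 1)\<bar>) sums (2 * q / (1 - q))"
proof -
  have "(\<lambda>m. 2 * q * (- q) ^ m) sums (2 * q * (1 / (1 - - q)))"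
    using assms by (intro sums_mult geometric_sums) auto
  moreover have "2 * q * (- q) ^ m = 2 * (-1) ^ m * q ^ (m + 1)" for m
    by (subst power_minus) (simp add: mult_ac)
  ultimately show "(\<lambda>m. 2 * (-1) ^ m * q ^ (m + 1)) sums (2 * q / (1 + q))"
    by simp
  have "(\<lambda>m. 2 * q * q ^ m) sums (2 * q * (1 / (1 - q)))"
    using assms by (intro sums_mult geometric_sums) auto
  thus "(\<lambda>m. \<bar>2 * (-1) ^ m * q ^ (m + 1)\<bar>) sums (2 * q / (1 - q))"
    using assms(1) by (simp add: abs_mult power_abs mult_ac)
qed

lemma bernoulli_even_part_sums:
  fixes t :: real
  assumes t: "t \<noteq> 0" "\<bar>t\<bar> < 2 * pi"
  shows "(\<lambda>m. 2 * (-1) ^ m * zeta_nat (2 * m + 2) * (t / (2 * pi)) ^ (2 * m + 2))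
           sums (t / (exp t - 1) + t / 2 - 1)"
proof -
  define r where "r = (t / (2 * pi))\<^sup>2"
  define q where "q k = r / real (Suc k) ^ 2" for k
  have r: "0 \<le> r" "r < 1"
  proof -
    have "\<bar>t / (2 * pi)\<bar> < 1"
      using t(2) by (simp add: abs_divide)
    thus "0 \<le> r" "r < 1"
      by (simp_all add: r_def abs_square_less_1)
  qed
  have q: "0 \<le> q k" "q k \<le> r" "q k < 1" for k
  proof -
    have "1 \<le> real (Suc k) ^ 2"
      by simp
    thus "0 \<le> q k" "q k \<le> r"
      using divide_left_mono[of 1 "real (Suc k) ^ 2" r] r by (simp_all add: q_def)
    thus "q k < 1"
      using r by simp
  qed
  have rows: "(\<lambda>m. 2 * (-1) ^ m * q k ^ (m + 1)) sums (2 * t\<^sup>2 / (4 * pi\<^sup>2 * real (Suc k) ^ 2 + t\<^sup>2))" for k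
  proof -
    have "0 < real (Suc k) ^ 2 + r" "0 < 4 * pi\<^sup>2 * real (Suc k) ^ 2 + t\<^sup>2"
      using r(1) by (auto intro: add_pos_nonneg)
    hence "2 * q k / (1 + q k) = 2 * t\<^sup>2 / (4 * pi\<^sup>2 * real (Suc k) ^ 2 + t\<^sup>2)"
      by (simp add: q_def r_def power_divide field_simps)
    thus ?thesis
      using alternating_geometric_sums(1)[OF q(1,3)[of k]] by (simp only:)
  qed
  have abs_rows: "(\<lambda>m. \<bar>2 * (-1) ^ m * q k ^ (m + 1)\<bar>) sums (2 * q k / (1 - q k))" for k
    using alternating_geometric_sums(2)[OF q(1,3)[of k]] .
  have "summable (\<lambda>k. 2 * q k / (1 - q k))"
  proof (rule summable_comparison_test'[of "\<lambda>k. 2 * r / (1 - r) * (1 / real (Suc k) ^ 2)"])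
    show "summable (\<lambda>k. 2 * r / (1 - r) * (1 / real (Suc k) ^ 2))"
      by (intro summable_mult sums_summable[OF zeta_nat_sums]) simp
    show "norm (2 * q k / (1 - q k)) \<le> 2 * r / (1 - r) * (1 / real (Suc k) ^ 2)" for k
    proof -
      have "0 \<le> 2 * q k / (1 - q k)"
        using q[of k] r by simp
      moreover have "2 * q k / (1 - q k) \<le> 2 * q k / (1 - r)"
        using q[of k] r by (intro divide_left_mono) auto
      moreover have "2 * q k / (1 - r) = 2 * r / (1 - r) * (1 / real (Suc k) ^ 2)"
        by (simp add: q_def)
      ultimately show ?thesis
        by (simp only: real_norm_def abs_of_nonneg)
    qed
  qed
  moreover have cols: "(\<lambda>k. 2 * (-1) ^ m * q k ^ (m + 1))
                         sums (2 * (-1) ^ m * zeta_nat (2 * m + 2) * (t / (2 * pi)) ^ (2 * m + 2))" for m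
  proof -
    have "q k ^ (m + 1) = r ^ (m + 1) * (1 / real (Suc k) ^ (2 * m + 2))" for k
    proof -
      have "real (Suc k) ^ (2 * m + 2) = (real (Suc k) ^ 2) ^ (m + 1)"
        using power_mult[of "real (Suc k)" 2 "m + 1"] by simp
      thus ?thesis
        by (simp add: q_def power_divide)
    qed
    moreover have "r ^ (m + 1) = (t / (2 * pi)) ^ (2 * m + 2)"
      using power_mult[of "t / (2 * pi)" 2 "m + 1"] by (simp add: r_def)
    ultimately show ?thesis
      using sums_mult[OF zeta_nat_sums[of "2 * m + 2"], of "2 * (-1) ^ m * r ^ (m + 1)"]
      by (simp add: mult_ac)
  qed
  ultimately show ?thesis
    by (intro sums_swap_of_abs_summable[OF rows cols abs_rows]
              bernoulli_generating_partial_fractions t(1))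
qed

(* Euler's values of the Bernoulli numbers; shown below to be the unique solution that
   bernoulli_num selects with THE. *)
definition bernoulli_zeta :: "nat \<Rightarrow> real" where
  "bernoulli_zeta n =
     (if n = 0 then 1 else if n = 1 then - 1 / 2 else if odd n then 0
      else (-1) ^ (n div 2 + 1) * 2 * fact n * zeta_nat n / (2 * pi) ^ n)"

lemma bernoulli_zeta_generating:
  fixes t :: real
  assumes t: "t \<noteq> 0" "\<bar>t\<bar> < 2 * pi"
  shows "(\<lambda>n. bernoulli_zeta n * t ^ n / fact n) sums (t / (exp t - 1))"
proof -
  define f where "f n = bernoulli_zeta n * t ^ n / fact n" for n
  have "f (2 * m + 2) = 2 * (-1) ^ m * zeta_nat (2 * m + 2) * (t / (2 * pi)) ^ (2 * m + 2)" for m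
  proof -
    have "(2 * m + 2) div 2 + 1 = m + 2"
      by simp
    thus ?thesis
      by (simp add: f_def bernoulli_zeta_def power_divide)
  qed
  hence "(\<lambda>m. f (2 * m + 2)) sums (t / (exp t - 1) + t / 2 - 1)"
    using bernoulli_even_part_sums[OF t] by simp
  hence "(\<lambda>n. f (n + 2)) sums (t / (exp t - 1) + t / 2 - 1)"
  proof (rule sums_mono_reindex[where g = "\<lambda>m. 2 * m", THEN iffD1, rotated 2])
    show "strict_mono (\<lambda>m::nat. 2 * m)"
      by (auto simp: strict_mono_def)
    show "f (n + 2) = 0" if "n \<notin> range (\<lambda>m. 2 * m)" for n
      using that by (auto simp: f_def bernoulli_zeta_def elim!: evenE)
  qed
  hence "f sums (t / (exp t - 1) + t / 2 - 1 + (\<Sum>n<2. f n))"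
    by (simp only: sums_iff_shift)
  moreover have "(\<Sum>n<2. f n) = 1 - t / 2"
    by (simp add: f_def bernoulli_zeta_def eval_nat_numeral)
  ultimately have "f sums (t / (exp t - 1))"
    by simp
  thus ?thesis
    unfolding f_def .
qed

lemma powser_sums_0_imp_const_coeff_0:
  fixes a :: "nat \<Rightarrow> real"
  assumes "0 < s" and "\<And>x. x \<noteq> 0 \<Longrightarrow> \<bar>x\<bar> < s \<Longrightarrow> (\<lambda>n. a n * x ^ n) sums 0"
  shows "a 0 = 0"
proof -
  have "((\<lambda>_. 0) \<longlongrightarrow> a 0) (at (0 :: real))"
    by (rule powser_limit_0_strong[OF assms(1)]) (use assms(2) in auto)
  thus ?thesis
    by (simp add: tendsto_const_iff)
qed

lemma powser_sums_0_imp_coeffs_0: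
  fixes a :: "nat \<Rightarrow> real"
  assumes "0 < s" and "\<And>x. x \<noteq> 0 \<Longrightarrow> \<bar>x\<bar> < s \<Longrightarrow> (\<lambda>n. a n * x ^ n) sums 0"
  shows "a k = 0"
  using assms(2)
proof (induction k arbitrary: a)
  case 0
  show ?case
    by (rule powser_sums_0_imp_const_coeff_0[OF assms(1) 0])
next
  case (Suc k)
  have "a 0 = 0"
    by (rule powser_sums_0_imp_const_coeff_0[OF assms(1) Suc.prems])
  have "(\<lambda>n. a (Suc n) * x ^ n) sums 0" if "x \<noteq> 0" "\<bar>x\<bar> < s" for x
  proof -
    have "(\<lambda>n. a (Suc n) * x ^ Suc n) sums 0"
      using Suc.prems[OF that] \<open>a 0 = 0\<close> by (subst sums_Suc_iff) simp
    hence "(\<lambda>n. a (Suc n) * x ^ Suc n / x) sums (0 / x)"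
      by (rule sums_divide)
    thus ?thesis
      using that(1) by (simp add: mult_ac)
  qed
  thus ?case
    by (rule Suc.IH)
qed

lemma bernoulli_num_eq_bernoulli_zeta: "bernoulli_num = bernoulli_zeta"
  unfolding bernoulli_num_def
proof (rule the_equality)
  show "\<forall>t. t \<noteq> 0 \<and> \<bar>t\<bar> < 2 * pi \<longrightarrow> (\<lambda>n. bernoulli_zeta n * t ^ n / fact n) sums (t / (exp t - 1))"
    using bernoulli_zeta_generating by blast
  fix B :: "nat \<Rightarrow> real"
  assume B: "\<forall>t. t \<noteq> 0 \<and> \<bar>t\<bar> < 2 * pi \<longrightarrow> (\<lambda>n. B n * t ^ n / fact n) sums (t / (exp t - 1))"
  have "(B n - bernoulli_zeta n) / fact n = 0" for n
  proof (rule powser_sums_0_imp_coeffs_0[of "2 * pi"])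
    fix x :: real
    assume "x \<noteq> 0" "\<bar>x\<bar> < 2 * pi"
    hence "(\<lambda>n. B n * x ^ n / fact n - bernoulli_zeta n * x ^ n / fact n) sums (x / (exp x - 1) - x / (exp x - 1))"
      using B bernoulli_zeta_generating by (intro sums_diff) auto
    thus "(\<lambda>n. (B n - bernoulli_zeta n) / fact n * x ^ n) sums 0"
      by (simp add: field_simps)
  qed simp
  thus "B = bernoulli_zeta"
    by auto
qed

lemma abs_bernoulli_num_even:
  "\<bar>bernoulli_num (2 * m + 2)\<bar> = 2 * fact (2 * m + 2) * zeta_nat (2 * m + 2) / (2 * pi) ^ (2 * m + 2)"
proof -
  have "(2 * m + 2) div 2 + 1 = m + 2"
    by simp
  thus ?thesis
    using zeta_nat_nonneg[of "2 * m + 2"]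
    by (simp add: bernoulli_num_eq_bernoulli_zeta bernoulli_zeta_def abs_mult)
qed

section \<open>Expansion of the derivative series\<close>

lemma frac_square_expansion:
  fixes A x :: real
  assumes "A \<noteq> 0" "A \<noteq> x"
  shows "x / (A - x)\<^sup>2 = (\<Sum>m=1..<N. real m * x ^ m / A ^ (m + 1))
           + real N * x ^ N / (A ^ N * (A - x)) + x ^ (N + 1) / (A ^ N * (A - x)\<^sup>2)"
proof (induction N)
  case (Suc N)
  have sum: "(\<Sum>m=1..<Suc N. real m * x ^ m / A ^ (m + 1))
               = (\<Sum>m=1..<N. real m * x ^ m / A ^ (m + 1)) + real N * x ^ N / A ^ (N + 1)"
    by (cases N) simp_all
  define D where "D = A - x"
  define P where "P = A ^ N"
  define X where "X = x ^ N"
  have A: "A = D + x" and nonzero: "A \<noteq> 0" "P \<noteq> 0" "D \<noteq> 0"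
    using assms by (simp_all add: P_def D_def)
  have "real N * X / (P * D) + x * X / (P * D\<^sup>2)
           = real N * X / (A * P) + (real N + 1) * x * X / (A * P * D) + x\<^sup>2 * X / (A * P * D\<^sup>2)"
    using nonzero by (simp add: field_simps power2_eq_square) (simp add: A algebra_simps)
  hence "real N * x ^ N / (A ^ N * (A - x)) + x ^ (N + 1) / (A ^ N * (A - x)\<^sup>2)
          = real N * x ^ N / A ^ (N + 1) + real (Suc N) * x ^ Suc N / (A ^ Suc N * (A - x))
            + x ^ (Suc N + 1) / (A ^ Suc N * (A - x)\<^sup>2)"
    by (simp add: P_def X_def D_def power2_eq_square mult_ac)
  with Suc.IH show ?case
    unfolding sum by simp
qed simp

lemma tan_deriv_term_expansion:
  fixes t :: real
  assumes D: "tan_denom t k \<noteq> 0"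
  defines "w \<equiv> 2 * real k + 1"
  shows "64 * t ^ 3 / (tan_denom t k)\<^sup>2 =
           (\<Sum>m=1..<N. 2 ^ (2 * m + 4) * real m * t ^ (2 * m + 1) / pi ^ (2 * m + 2) * (1 / w ^ (2 * m + 2)))
           + real N * 2 ^ (2 * N + 4) * t ^ (2 * N + 1) / pi ^ (2 * N) * (1 / (w ^ (2 * N) * tan_denom t k))
           + 2 ^ (2 * N + 6) * t ^ (2 * N + 3) / pi ^ (2 * N) * (1 / (w ^ (2 * N) * (tan_denom t k)\<^sup>2))"
proof -
  define A where "A = pi\<^sup>2 * w\<^sup>2"
  have A: "A \<noteq> 0" "tan_denom t k = A - 4 * t\<^sup>2"
    by (simp_all add: A_def w_def tan_denom_def add_nonneg_eq_0_iff)
  have "64 * t ^ 3 / (tan_denom t k)\<^sup>2 = 16 * t * (4 * t\<^sup>2 / (A - 4 * t\<^sup>2)\<^sup>2)"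
    by (simp add: A(2) power3_eq_cube power2_eq_square)
  also have "\<dots> = 16 * t * ((\<Sum>m=1..<N. real m * (4 * t\<^sup>2) ^ m / A ^ (m + 1))
           + real N * (4 * t\<^sup>2) ^ N / (A ^ N * (A - 4 * t\<^sup>2))
           + (4 * t\<^sup>2) ^ (N + 1) / (A ^ N * (A - 4 * t\<^sup>2)\<^sup>2))"
    using A D by (subst frac_square_expansion) auto
  also have "\<dots> = (\<Sum>m=1..<N. 2 ^ (2 * m + 4) * real m * t ^ (2 * m + 1) / pi ^ (2 * m + 2) * (1 / w ^ (2 * m + 2)))
           + real N * 2 ^ (2 * N + 4) * t ^ (2 * N + 1) / pi ^ (2 * N) * (1 / (w ^ (2 * N) * tan_denom t k))
           + 2 ^ (2 * N + 6) * t ^ (2 * N + 3) / pi ^ (2 * N) * (1 / (w ^ (2 * N) * (tan_denom t k)\<^sup>2))"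
  proof -
    have even_power: "x ^ (2 * m) = (x\<^sup>2) ^ m" for x :: real and m
      by (simp add: power_mult)
    show ?thesis
      unfolding distrib_left sum_distrib_left A(2)[symmetric] power_add even_power
      by (simp add: A_def power_mult_distrib power3_eq_cube power2_eq_square mult_ac)
  qed
  finally show ?thesis .
qed

lemma summable_tan_denom_inverse_power:
  assumes t: "\<bar>t\<bar> < pi / 2" and p: "1 \<le> p"
  shows "summable (\<lambda>k. 1 / ((2 * real k + 1) ^ j * (tan_denom t k) ^ p))"
proof (rule summable_comparison_test'[OF summable_mult[OF summable_inverse_odd_squares]])
  fix k
  define w where "w = (2 * real k + 1)\<^sup>2"
  define c where "c = pi\<^sup>2 - 4 * t\<^sup>2"
  have w: "1 \<le> w" and c: "0 < c"
    using odd_square_ge_1 pi_square_minus_pos t by (auto simp: w_def c_def)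
  have "w \<le> w ^ p"
    using power_increasing[OF p w] by simp
  hence "c ^ p * w \<le> c ^ p * w ^ p"
    using c by simp
  also have "\<dots> \<le> (tan_denom t k) ^ p"
    unfolding power_mult_distrib[symmetric]
    using tan_denom_lower_bound[of t "\<bar>t\<bar>" k] c w
    by (intro power_mono) (simp_all add: c_def w_def)
  also have "\<dots> \<le> (2 * real k + 1) ^ j * (tan_denom t k) ^ p"
    using mult_right_mono[of 1 "(2 * real k + 1) ^ j" "(tan_denom t k) ^ p"] tan_denom_pos[OF t, of k]
    by simp
  finally have "c ^ p * w \<le> (2 * real k + 1) ^ j * (tan_denom t k) ^ p" .
  moreover have "0 < c ^ p * w"
    using c w by simp
  ultimately have "1 / ((2 * real k + 1) ^ j * (tan_denom t k) ^ p) \<le> 1 / (c ^ p * w)"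
    by (intro divide_left_mono) (auto intro: mult_pos_pos order_less_le_trans)
  thus "norm (1 / ((2 * real k + 1) ^ j * (tan_denom t k) ^ p)) \<le> 1 / c ^ p * (1 / (2 * real k + 1)\<^sup>2)"
    using tan_denom_pos[OF t, of k] by (simp add: w_def)
qed

lemma kappa_sums:
  assumes t: "\<bar>t\<bar> < pi / 2"
  shows "(\<lambda>k. real N * 2 ^ (2 * N + 4) * t ^ (2 * N + 1) / pi ^ (2 * N)
                 * (1 / ((2 * real k + 1) ^ (2 * N) * tan_denom t k))
              + 2 ^ (2 * N + 6) * t ^ (2 * N + 3) / pi ^ (2 * N)
                 * (1 / ((2 * real k + 1) ^ (2 * N) * (tan_denom t k)\<^sup>2)))
           sums kappa N t"
proof -
  have odd: "2 * real (Suc k) - 1 = 2 * real k + 1" for k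
    by simp
  show ?thesis
    unfolding kappa_def odd tan_denom_def[symmetric]
    using summable_tan_denom_inverse_power[OF t, of 1 "2 * N"]
          summable_tan_denom_inverse_power[OF t, of 2 "2 * N"]
    by (intro sums_add sums_mult summable_sums) simp_all
qed

lemma bernoulli_coefficient_sums:
  "(\<lambda>k. 2 ^ (2 * m + 4) * real m * t ^ (2 * m + 1) / pi ^ (2 * m + 2) * (1 / (2 * real k + 1) ^ (2 * m + 2)))
     sums (2 * real m * 2 ^ (2 * m + 2) * (2 ^ (2 * m + 2) - 1)
             * \<bar>bernoulli_num (2 * m + 2)\<bar> / fact (2 * m + 2) * t ^ (2 * m + 1))"
proof -
  have "(\<lambda>k. 2 ^ (2 * m + 4) * real m * t ^ (2 * m + 1) / pi ^ (2 * m + 2) * (1 / (2 * real k + 1) ^ (2 * m + 2)))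
          sums (2 ^ (2 * m + 4) * real m * t ^ (2 * m + 1) / pi ^ (2 * m + 2)
                  * ((1 - 1 / 2 ^ (2 * m + 2)) * zeta_nat (2 * m + 2)))"
    by (intro sums_mult odd_zeta_sums) simp
  moreover have "2 ^ (2 * m + 4) * real m * t ^ (2 * m + 1) / pi ^ (2 * m + 2)
                   * ((1 - 1 / 2 ^ (2 * m + 2)) * zeta_nat (2 * m + 2))
                 = 2 * real m * 2 ^ (2 * m + 2) * (2 ^ (2 * m + 2) - 1)
                   * \<bar>bernoulli_num (2 * m + 2)\<bar> / fact (2 * m + 2) * t ^ (2 * m + 1)"
  proof -
    have identity: "4 * p * real m * T / Q * ((1 - 1 / p) * Z)
                      = 2 * real m * p * (p - 1) * (2 * F * Z / (p * Q)) / F * T"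
      if "0 < p" "0 < Q" "0 < F" for p Q F Z T :: real
      using that by (simp add: field_simps)
    have "(2 :: real) ^ (2 * m + 4) = 4 * 2 ^ (2 * m + 2)"
      "(2 * pi) ^ (2 * m + 2) = 2 ^ (2 * m + 2) * pi ^ (2 * m + 2)"
      by (simp_all add: power_add power_mult_distrib)
    thus ?thesis
      unfolding abs_bernoulli_num_even by (simp only:) (rule identity; simp)
  qed
  ultimately show ?thesis
    by simp
qed

lemma tan_deriv_bernoulli_expansion:
  assumes t: "\<bar>t\<bar> < pi / 2"
  shows "t / (cos t)\<^sup>2 - tan t =
    (\<Sum>j=1..<N. 2 * real j * 2 ^ (2 * j + 2) * (2 ^ (2 * j + 2) - 1)
        * \<bar>bernoulli_num (2 * j + 2)\<bar> / fact (2 * j + 2) * t ^ (2 * j + 1))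
    + kappa N t"
proof (rule sums_unique2[OF tan_deriv_partial_fractions[OF t]])
  show "(\<lambda>k. 64 * t ^ 3 / (tan_denom t k)\<^sup>2) sums
          ((\<Sum>j=1..<N. 2 * real j * 2 ^ (2 * j + 2) * (2 ^ (2 * j + 2) - 1)
              * \<bar>bernoulli_num (2 * j + 2)\<bar> / fact (2 * j + 2) * t ^ (2 * j + 1))
           + kappa N t)"
    unfolding tan_deriv_term_expansion[OF tan_denom_pos[OF t, THEN less_imp_neq, symmetric], of _ N]
              add.assoc
    by (intro sums_add sums_sum bernoulli_coefficient_sums kappa_sums[OF t])
qed

theorem mainTheorem12:
  fixes N :: nat and t :: real
  assumes "N \<ge> 1" and "\<bar>t\<bar> < pi / 2"
  shows "t / (cos t)\<^sup>2 - tan t =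
    (\<Sum>j = 1..N - 1. 2 * real j * 2 ^ (2 * j + 2) * (2 ^ (2 * j + 2) - 1)
        * \<bar>bernoulli_num (2 * j + 2)\<bar> / fact (2 * j + 2) * t ^ (2 * j + 1))
    + kappa N t"
proof -
  have "{1..N - 1} = {1..<N}"
    by auto
  thus ?thesis
    using tan_deriv_bernoulli_expansion[OF assms(2)] by simp
qed

end
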